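(* Let $n\ge1$. The Zariski closure of the boundary of the cone of $n\times n$ real symmetric copositive matrices (equivalently, of $\partial\mathcal C_{n,2}$ via $f(x)=x^TAx$) is the hypersurface $$\Big\{A=A^T:\ \prod_{\emptyset\ne I\subseteq[n]}\det A(I,I)=0\Big\}.$$
   Context: A real symmetric $n\times n$ matrix $A$ is copositive if $x^TAx\ge0$ for all $x\in\mathbb R^n_+$; $\mathcal C_{n,2}$ denotes the cone of copositive quadratic forms. $A(I,I)$ is the principal submatrix of $A$ with row and column indices in $I\subseteq[n]=\{1,\dots,n\}$. The Zariski closure of a set of symmetric matrices is the smallest complex algebraic variety in the space of complex symmetric matrices containing it. *)

theory Defs
  imports Complex_Main "Jordan_Normal_Form.Determinant" "Jordan_Normal_Form.DL_Submatrix"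
begin

definition sym_real :: "nat \<Rightarrow> real mat set" where
  "sym_real n = {A. A \<in> carrier_mat n n \<and> A\<^sup>T = A}"

definition copositive :: "nat \<Rightarrow> real mat \<Rightarrow> bool" where
  "copositive n A \<longleftrightarrow> (\<forall>x \<in> carrier_vec n. (\<forall>i<n. x $ i \<ge> 0) \<longrightarrow> x \<bullet> (A *\<^sub>v x) \<ge> 0)"

definition cop_cone :: "nat \<Rightarrow> real mat set" where
  "cop_cone n = {A \<in> sym_real n. copositive n A}"

definition sym_boundary :: "nat \<Rightarrow> real mat set \<Rightarrow> real mat set" where
  "sym_boundary n S = {A \<in> sym_real n. \<forall>e>0.
      (\<exists>B\<in>S. \<forall>i<n. \<forall>j<n. \<bar>B $$ (i,j) - A $$ (i,j)\<bar> < e) \<and>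
      (\<exists>B\<in>sym_real n - S. \<forall>i<n. \<forall>j<n. \<bar>B $$ (i,j) - A $$ (i,j)\<bar> < e)}"

definition sym_complex :: "nat \<Rightarrow> complex mat set" where
  "sym_complex n = {A. A \<in> carrier_mat n n \<and> A\<^sup>T = A}"

inductive_set poly_fun :: "nat \<Rightarrow> (complex mat \<Rightarrow> complex) set" for n where
  const: "(\<lambda>A. c) \<in> poly_fun n"
| var: "i < n \<Longrightarrow> j < n \<Longrightarrow> (\<lambda>A. A $$ (i,j)) \<in> poly_fun n"
| add: "p \<in> poly_fun n \<Longrightarrow> q \<in> poly_fun n \<Longrightarrow> (\<lambda>A. p A + q A) \<in> poly_fun n"
| mult: "p \<in> poly_fun n \<Longrightarrow> q \<in> poly_fun n \<Longrightarrow> (\<lambda>A. p A * q A) \<in> poly_fun n"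

definition zariski_closed :: "nat \<Rightarrow> complex mat set \<Rightarrow> bool" where
  "zariski_closed n V \<longleftrightarrow>
     (\<exists>P \<subseteq> poly_fun n. V = {A \<in> sym_complex n. \<forall>p\<in>P. p A = 0})"

definition zariski_closure :: "nat \<Rightarrow> complex mat set \<Rightarrow> complex mat set" where
  "zariski_closure n S = \<Inter> {V. zariski_closed n V \<and> S \<subseteq> V}"

end

theory Submission
  imports Defs "HOL-Analysis.Function_Topology"
begin

(*
  Let H be the set of complex symmetric n x n matrices at which the product of all
  principal minors det A(I,I), I a nonempty subset of [n], vanishes.

  1. H is Zariski closed: every principal minor is a polynomial in the entries (Leibniz
     formula), hence so is their product.
  2. The boundary of COP lies in H.  A boundary matrix A is copositive (COP is closed), and
     since it is not interior, x'Ax attains the value 0 on the standard simplex at some x.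
     First-order optimality at x gives (Ax)_i = 0 for all i in J = supp x, so x_J lies in
     the kernel of A(J,J) and det A(J,J) = 0.
  3. H lies in every variety containing the boundary.  For I and k in I we write down a
     polynomial parametrisation Phi_{I,k}(M,w) of symmetric matrices whose I-block has the
     kernel vector u with u_k = 1, u_j = w_j; every A in H is such a matrix.  For real
     parameters near (E + Id, 1), E the all-ones matrix, Phi(M,w) is copositive with the
     nonnegative zero u, hence on the boundary.  A polynomial vanishing on the boundary therefore
     vanishes along real lines through the base point near it, and by the identity theorem
     for univariate polynomials at all real and then all complex parameters, in particular
     at A.
*)

section \<open>Principal submatrices\<close>

(* pick I enumerates a finite index set I in increasing order. *)
lemma pick_bij_betw:
  assumes "finite I"
  shows "bij_betw (pick I) {..<card I} I"
proof -
  have inj: "inj_on (pick I) {..<card I}"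
    by (rule linorder_inj_onI) (auto dest: pick_mono_le)
  have sub: "pick I ` {..<card I} \<subseteq> I" using pick_in_set_le by auto
  have "card (pick I ` {..<card I}) = card I" using card_image[OF inj] by simp
  then have "pick I ` {..<card I} = I" using card_subset_eq[OF assms sub] by simp
  then show ?thesis using inj by (simp add: bij_betw_def)
qed

(* card {i \<in> I. i < j} is the position of j in I, hence below card I. *)
lemma card_below_less_card:
  fixes I :: "nat set"
  assumes "finite I" "j \<in> I"
  shows "card {i\<in>I. i < j} < card I"
proof (rule psubset_card_mono[OF assms(1)])
  have "j \<notin> {i\<in>I. i < j}" by simp
  then show "{i\<in>I. i < j} \<subset> I" using assms(2) by blast
qed

lemma index_mult_mat_vec_sum:
  assumes "B \<in> carrier_mat m m" "v \<in> carrier_vec m" "a < m"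
  shows "(B *\<^sub>v v) $ a = (\<Sum>b<m. B $$ (a,b) * v $ b)"
proof -
  have "(B *\<^sub>v v) $ a = Matrix.row B a \<bullet> v" using assms by simp
  also have "\<dots> = (\<Sum>b\<in>{0..<m}. Matrix.row B a $ b * v $ b)"
    using assms unfolding scalar_prod_def by simp
  also have "\<dots> = (\<Sum>b<m. B $$ (a,b) * v $ b)" using assms by (intro sum.cong) auto
  finally show ?thesis .
qed

lemma submatrix_carrier:
  assumes "A \<in> carrier_mat n n" "I \<subseteq> {..<n}"
  shows "submatrix A I I \<in> carrier_mat (card I) (card I)"
proof -
  have "{i. i < n \<and> i \<in> I} = I" using assms(2) by auto
  then show ?thesis using assms(1) unfolding carrier_mat_def by (simp add: dim_submatrix)
qed

lemma submatrix_entry: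
  assumes A: "A \<in> carrier_mat n n" and I: "I \<subseteq> {..<n}" and "a < card I" "b < card I"
  shows "submatrix A I I $$ (a,b) = A $$ (pick I a, pick I b)"
proof -
  have "{i. i < dim_row A \<and> i \<in> I} = I" "{i. i < dim_col A \<and> i \<in> I} = I" using I A by auto
  then show ?thesis using assms(3,4) by (intro submatrix_index) simp_all
qed

lemma submatrix_mult_vec:
  assumes A: "A \<in> carrier_mat n n" and I: "I \<subseteq> {..<n}"
    and v: "v \<in> carrier_vec (card I)" and a: "a < card I"
  shows "(submatrix A I I *\<^sub>v v) $ a = (\<Sum>j\<in>I. A $$ (pick I a, j) * v $ card {i\<in>I. i < j})"
proof -
  have fin: "finite I" using I finite_subset by blast
  have "(submatrix A I I *\<^sub>v v) $ a = (\<Sum>b<card I. submatrix A I I $$ (a,b) * v $ b)"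
    by (rule index_mult_mat_vec_sum[OF submatrix_carrier[OF A I] v a])
  also have "\<dots> = (\<Sum>b<card I. A $$ (pick I a, pick I b) * v $ card {i\<in>I. i < pick I b})"
    by (intro sum.cong refl) (simp add: submatrix_entry[OF A I a] card_pick_le)
  also have "\<dots> = (\<Sum>j\<in>I. A $$ (pick I a, j) * v $ card {i\<in>I. i < j})"
    by (rule sum.reindex_bij_betw[OF pick_bij_betw[OF fin]])
  finally show ?thesis .
qed

(* A principal minor vanishes iff the principal submatrix has a nonzero kernel vector,
   phrased with vectors indexed by I itself. *)
lemma det_submatrix_eq_0_iff:
  fixes A :: "'a::field mat"
  assumes A: "A \<in> carrier_mat n n" and I: "I \<subseteq> {..<n}"
  shows "det (submatrix A I I) = 0 \<longleftrightarrow>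
    (\<exists>u. (\<exists>j\<in>I. u j \<noteq> 0) \<and> (\<forall>i\<in>I. (\<Sum>j\<in>I. A $$ (i,j) * u j) = 0))"
proof -
  let ?m = "card I" and ?S = "submatrix A I I" and ?pos = "\<lambda>j. card {i\<in>I. i < j}"
  have fin: "finite I" using I finite_subset by blast
  have S: "?S \<in> carrier_mat ?m ?m" by (rule submatrix_carrier[OF A I])
  have pos: "?pos j < ?m" "pick I (?pos j) = j" if "j \<in> I" for j
    using card_below_less_card[OF fin that] pick_card_in_set[OF that] by auto
  have row: "(?S *\<^sub>v v) $ ?pos i = (\<Sum>j\<in>I. A $$ (i,j) * v $ ?pos j)"
    if "v \<in> carrier_vec ?m" "i \<in> I" for v i
    using submatrix_mult_vec[OF A I that(1) pos(1)[OF that(2)]] pos(2)[OF that(2)] by simp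
  show ?thesis
  proof
    assume "det ?S = 0"
    then obtain v where v: "v \<in> carrier_vec ?m" "v \<noteq> 0\<^sub>v ?m" "?S *\<^sub>v v = 0\<^sub>v ?m"
      using det_0_iff_vec_prod_zero[OF S] by auto
    obtain b where b: "b < ?m" "v $ b \<noteq> 0" using v(1,2) by (auto simp: vec_eq_iff)
    have "pick I b \<in> I" "?pos (pick I b) = b" using b(1) pick_in_set_le card_pick_le by auto
    then have nonzero: "\<exists>j\<in>I. v $ ?pos j \<noteq> 0" using b(2) by metis
    have kernel: "\<forall>i\<in>I. (\<Sum>j\<in>I. A $$ (i,j) * v $ ?pos j) = 0"
      using row[OF v(1)] v(3) pos(1) by simp
    show "\<exists>u. (\<exists>j\<in>I. u j \<noteq> 0) \<and> (\<forall>i\<in>I. (\<Sum>j\<in>I. A $$ (i,j) * u j) = 0)"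
      by (rule exI[where x = "\<lambda>j. v $ ?pos j"]) (use nonzero kernel in simp)
  next
    assume "\<exists>u. (\<exists>j\<in>I. u j \<noteq> 0) \<and> (\<forall>i\<in>I. (\<Sum>j\<in>I. A $$ (i,j) * u j) = 0)"
    then obtain u where u: "\<exists>j\<in>I. u j \<noteq> 0" "\<And>i. i \<in> I \<Longrightarrow> (\<Sum>j\<in>I. A $$ (i,j) * u j) = 0"
      by blast
    define v where "v = Matrix.vec ?m (\<lambda>b. u (pick I b))"
    have v: "v \<in> carrier_vec ?m" by (simp add: v_def)
    have v_pos: "v $ ?pos j = u j" if "j \<in> I" for j using pos[OF that] by (simp add: v_def)
    have "v \<noteq> 0\<^sub>v ?m"
    proof
      assume v0: "v = 0\<^sub>v ?m"
      obtain j where "j \<in> I" "u j \<noteq> 0" using u(1) by blast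
      then show False using v_pos[of j] pos(1)[of j] v0 by simp
    qed
    moreover have "?S *\<^sub>v v = 0\<^sub>v ?m"
    proof (rule eq_vecI)
      fix a assume "a < dim_vec (0\<^sub>v ?m :: 'a vec)"
      then have a: "a < ?m" by simp
      then have aI: "pick I a \<in> I" and a_pos: "?pos (pick I a) = a"
        using pick_in_set_le card_pick_le by auto
      have "(?S *\<^sub>v v) $ a = (\<Sum>j\<in>I. A $$ (pick I a, j) * u j)"
        using row[OF v aI] by (simp add: a_pos v_pos)
      then show "(?S *\<^sub>v v) $ a = 0\<^sub>v ?m $ a" using u(2)[OF aI] a by simp
    qed (use S in simp)
    ultimately show "det ?S = 0" using det_0_iff_vec_prod_zero[OF S] v by blast
  qed
qed

section \<open>The minor hypersurface is Zariski closed\<close>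

lemma poly_fun_sum:
  "finite F \<Longrightarrow> (\<And>x. x \<in> F \<Longrightarrow> g x \<in> poly_fun n) \<Longrightarrow> (\<lambda>A. \<Sum>x\<in>F. g x A) \<in> poly_fun n"
proof (induction F rule: finite_induct)
  case empty
  then show ?case using poly_fun.const[of 0 n] by simp
next
  case (insert x F)
  then show ?case using poly_fun.add[of "g x" n "\<lambda>A. \<Sum>x\<in>F. g x A"] by simp
qed

lemma poly_fun_prod:
  "finite F \<Longrightarrow> (\<And>x. x \<in> F \<Longrightarrow> g x \<in> poly_fun n) \<Longrightarrow> (\<lambda>A. \<Prod>x\<in>F. g x A) \<in> poly_fun n"
proof (induction F rule: finite_induct)
  case empty
  then show ?case using poly_fun.const[of 1 n] by simp
next
  case (insert x F)
  then show ?case using poly_fun.mult[of "g x" n "\<lambda>A. \<Prod>x\<in>F. g x A"] by simp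
qed

definition minor_poly :: "nat set \<Rightarrow> complex mat \<Rightarrow> complex" where
  "minor_poly I A = (\<Sum>p | p permutes {0..<card I}.
     of_int (sign p) * (\<Prod>i = 0..<card I. A $$ (pick I i, pick I (p i))))"

lemma minor_poly_poly_fun:
  assumes I: "I \<subseteq> {..<n}"
  shows "minor_poly I \<in> poly_fun n"
proof -
  have fin: "finite I" using I finite_subset by blast
  have pick_lt: "a < card I \<Longrightarrow> pick I a < n" for a
    using pick_bij_betw[OF fin] I by (auto simp: bij_betw_def)
  have "(\<lambda>A. \<Sum>p\<in>{p. p permutes {0..<card I}}.
      of_int (sign p) * (\<Prod>i = 0..<card I. A $$ (pick I i, pick I (p i)))) \<in> poly_fun n"
  proof (rule poly_fun_sum)
    show "finite {p. p permutes {0..<card I}}" by (rule finite_permutations) simp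
    fix p assume "p \<in> {p. p permutes {0..<card I}}"
    then have p_lt: "i < card I \<Longrightarrow> p i < card I" for i
      using permutes_in_image[of p] by auto
    have "(\<lambda>A. \<Prod>i = 0..<card I. A $$ (pick I i, pick I (p i))) \<in> poly_fun n"
      by (rule poly_fun_prod) (auto intro!: poly_fun.var pick_lt p_lt)
    then show "(\<lambda>A. of_int (sign p) * (\<Prod>i = 0..<card I. A $$ (pick I i, pick I (p i))))
        \<in> poly_fun n"
      using poly_fun.mult[OF poly_fun.const[of "of_int (sign p)" n]] by blast
  qed
  then show ?thesis unfolding minor_poly_def[abs_def] by simp
qed

lemma minor_poly_eq_det:
  assumes A: "A \<in> carrier_mat n n" and I: "I \<subseteq> {..<n}"
  shows "minor_poly I A = det (submatrix A I I)"
  unfolding det_def'[OF submatrix_carrier[OF A I]] minor_poly_def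
  by (intro sum.cong refl arg_cong2[where f = "(*)"] prod.cong)
     (auto simp: submatrix_entry[OF A I] permutes_in_image)

abbreviation principal_index_sets :: "nat \<Rightarrow> nat set set" where
  "principal_index_sets n \<equiv> {I. I \<subseteq> {..<n} \<and> I \<noteq> {}}"

lemma finite_principal_index_sets: "finite (principal_index_sets n)"
  by (rule finite_subset[of _ "Pow {..<n}"]) auto

definition minor_hypersurface :: "nat \<Rightarrow> complex mat set" where
  "minor_hypersurface n =
     {A \<in> sym_complex n. (\<Prod>I \<in> principal_index_sets n. det (submatrix A I I)) = 0}"

lemma minor_hypersurface_iff:
  "A \<in> minor_hypersurface n \<longleftrightarrow>
     A \<in> sym_complex n \<and> (\<exists>I \<in> principal_index_sets n. det (submatrix A I I) = 0)"
  unfolding minor_hypersurface_def using finite_principal_index_sets by simp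

lemma minor_hypersurface_closed: "zariski_closed n (minor_hypersurface n)"
proof -
  define f where "f = (\<lambda>A. \<Prod>I \<in> principal_index_sets n. minor_poly I A)"
  have f: "f \<in> poly_fun n" unfolding f_def
    by (rule poly_fun_prod[OF finite_principal_index_sets]) (auto intro: minor_poly_poly_fun)
  have "minor_hypersurface n = {A \<in> sym_complex n. \<forall>p\<in>{f}. p A = 0}"
    unfolding minor_hypersurface_def
  proof (intro Collect_cong conj_cong refl)
    fix A assume "A \<in> sym_complex n"
    then have A: "A \<in> carrier_mat n n" by (simp add: sym_complex_def)
    show "((\<Prod>I \<in> principal_index_sets n. det (submatrix A I I)) = 0) = (\<forall>p\<in>{f}. p A = 0)"
      unfolding f_def using minor_poly_eq_det[OF A] by (simp cong: prod.cong)
  qed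
  then show ?thesis unfolding zariski_closed_def using f by blast
qed

section \<open>Quadratic forms in coordinates\<close>

definition bform :: "nat \<Rightarrow> real mat \<Rightarrow> (nat \<Rightarrow> real) \<Rightarrow> (nat \<Rightarrow> real) \<Rightarrow> real" where
  "bform n A x y = (\<Sum>i<n. \<Sum>j<n. x i * A $$ (i,j) * y j)"

lemma bform_row: "bform n A x y = (\<Sum>i<n. x i * (\<Sum>j<n. A $$ (i,j) * y j))"
  unfolding bform_def by (simp add: sum_distrib_left mult.assoc)

lemma scalar_prod_eq_bform:
  assumes A: "A \<in> carrier_mat n n" and x: "x \<in> carrier_vec n"
  shows "x \<bullet> (A *\<^sub>v x) = bform n A (\<lambda>i. x $ i) (\<lambda>i. x $ i)"
proof -
  have "x \<bullet> (A *\<^sub>v x) = (\<Sum>i\<in>{0..<n}. x $ i * (A *\<^sub>v x) $ i)"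
    using A unfolding scalar_prod_def by simp
  also have "\<dots> = (\<Sum>i<n. x $ i * (\<Sum>j<n. A $$ (i,j) * x $ j))"
    by (intro sum.cong) (auto simp: index_mult_mat_vec_sum[OF A x])
  finally show ?thesis by (simp add: bform_row)
qed

lemma bform_cong:
  "(\<And>i. i < n \<Longrightarrow> x i = x' i) \<Longrightarrow> (\<And>i. i < n \<Longrightarrow> y i = y' i) \<Longrightarrow>
    bform n A x y = bform n A x' y'"
  unfolding bform_def by (intro sum.cong) auto

lemma bform_zero_left: "(\<And>i. i < n \<Longrightarrow> x i = 0) \<Longrightarrow> bform n A x y = 0"
  unfolding bform_def by simp

lemma bform_add_left: "bform n A (\<lambda>i. x i + y i) z = bform n A x z + bform n A y z"
  unfolding bform_def by (simp add: algebra_simps sum.distrib)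

lemma bform_add_right: "bform n A z (\<lambda>i. x i + y i) = bform n A z x + bform n A z y"
  unfolding bform_def by (simp add: algebra_simps sum.distrib)

lemma bform_scale_left: "bform n A (\<lambda>i. c * x i) z = c * bform n A x z"
  unfolding bform_def by (simp add: algebra_simps sum_distrib_left)

lemma bform_scale_right: "bform n A z (\<lambda>i. c * x i) = c * bform n A z x"
  unfolding bform_def by (simp add: algebra_simps sum_distrib_left)

lemma bform_sym:
  assumes "\<And>i j. i < n \<Longrightarrow> j < n \<Longrightarrow> A $$ (i,j) = A $$ (j,i)"
  shows "bform n A x y = bform n A y x"
proof -
  have "bform n A x y = (\<Sum>j<n. \<Sum>i<n. x i * A $$ (i,j) * y j)"
    unfolding bform_def by (rule sum.swap)
  also have "\<dots> = bform n A y x" unfolding bform_def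
    by (intro sum.cong refl) (auto simp: assms mult.commute mult.left_commute)
  finally show ?thesis .
qed

lemma bform_unit_right:
  assumes "j < n"
  shows "bform n A x (\<lambda>i. if i = j then 1 else 0) = (\<Sum>i<n. x i * A $$ (i,j))"
  unfolding bform_def using assms by (simp add: if_distrib cong: if_cong)

lemma bform_line:
  assumes "\<And>i j. i < n \<Longrightarrow> j < n \<Longrightarrow> A $$ (i,j) = A $$ (j,i)"
  shows "bform n A (\<lambda>i. x i + t * d i) (\<lambda>i. x i + t * d i) =
    bform n A x x + 2 * t * bform n A x d + t\<^sup>2 * bform n A d d"
proof -
  have "bform n A (\<lambda>i. x i + t * d i) (\<lambda>i. x i + t * d i) =
      bform n A x x + t * bform n A x d + (t * bform n A d x + t * (t * bform n A d d))"
    by (simp only: bform_add_left bform_add_right bform_scale_left bform_scale_right add.assoc)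
  also have "bform n A d x = bform n A x d" by (rule bform_sym[OF assms])
  finally show ?thesis by (simp add: power2_eq_square algebra_simps)
qed

lemma bform_perturbation:
  assumes "\<And>i j. i < n \<Longrightarrow> j < n \<Longrightarrow> \<bar>B $$ (i,j) - A $$ (i,j)\<bar> \<le> e"
  shows "\<bar>bform n B x x - bform n A x x\<bar> \<le> e * (\<Sum>i<n. \<bar>x i\<bar>)\<^sup>2"
proof -
  have "bform n B x x - bform n A x x = (\<Sum>i<n. \<Sum>j<n. x i * (B $$ (i,j) - A $$ (i,j)) * x j)"
    unfolding bform_def by (simp add: sum_subtractf algebra_simps)
  also have "\<bar>\<dots>\<bar> \<le> (\<Sum>i<n. \<Sum>j<n. \<bar>x i * (B $$ (i,j) - A $$ (i,j)) * x j\<bar>)"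
    by (rule order_trans[OF sum_abs]) (intro sum_mono sum_abs)
  also have "\<dots> \<le> (\<Sum>i<n. \<Sum>j<n. \<bar>x i\<bar> * e * \<bar>x j\<bar>)"
    by (intro sum_mono) (auto simp: abs_mult intro!: mult_right_mono mult_left_mono assms)
  also have "\<dots> = e * (\<Sum>i<n. \<bar>x i\<bar>)\<^sup>2"
    by (simp add: power2_eq_square sum_product algebra_simps sum_distrib_left)
  finally show ?thesis .
qed

lemma sym_real_entry_sym:
  assumes "A \<in> sym_real n" "i < n" "j < n"
  shows "A $$ (i,j) = A $$ (j,i)"
proof -
  have A: "A \<in> carrier_mat n n" "A\<^sup>T = A" using assms(1) by (auto simp: sym_real_def)
  have "A\<^sup>T $$ (i,j) = A $$ (j,i)" using A(1) assms(2,3) by simp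
  then show ?thesis using A(2) by simp
qed

lemma copositive_iff_bform:
  assumes A: "A \<in> carrier_mat n n"
  shows "copositive n A \<longleftrightarrow> (\<forall>x. (\<forall>i<n. 0 \<le> x i) \<longrightarrow> 0 \<le> bform n A x x)"
proof
  assume cop: "copositive n A"
  show "\<forall>x. (\<forall>i<n. 0 \<le> x i) \<longrightarrow> 0 \<le> bform n A x x"
  proof (intro allI impI)
    fix x :: "nat \<Rightarrow> real" assume x: "\<forall>i<n. 0 \<le> x i"
    let ?v = "Matrix.vec n x"
    have "0 \<le> ?v \<bullet> (A *\<^sub>v ?v)" using cop x unfolding copositive_def by auto
    also have "?v \<bullet> (A *\<^sub>v ?v) = bform n A x x"
      unfolding scalar_prod_eq_bform[OF A vec_carrier] by (rule bform_cong) auto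
    finally show "0 \<le> bform n A x x" .
  qed
next
  assume "\<forall>x. (\<forall>i<n. 0 \<le> x i) \<longrightarrow> 0 \<le> bform n A x x"
  then show "copositive n A"
    unfolding copositive_def by (auto simp: scalar_prod_eq_bform[OF A])
qed

lemma copositive_bformD:
  assumes "copositive n A" "A \<in> carrier_mat n n" "\<forall>i<n. 0 \<le> x i"
  shows "0 \<le> bform n A x x"
  using assms(1,3) unfolding copositive_iff_bform[OF assms(2)] by blast

section \<open>Boundary matrices are copositive with a nonnegative zero\<close>

(* The copositive cone is closed, so it contains its boundary. *)
lemma boundary_copositive:
  assumes A: "A \<in> sym_boundary n (cop_cone n)"
  shows "copositive n A"
proof (rule ccontr)
  assume "\<not> copositive n A"
  moreover have A_carrier: "A \<in> carrier_mat n n" using A by (simp add: sym_boundary_def sym_real_def)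
  ultimately obtain x where x: "\<forall>i<n. 0 \<le> x i" "bform n A x x < 0"
    unfolding copositive_iff_bform[OF A_carrier] by (auto simp: not_le)
  define s where "s = (\<Sum>i<n. \<bar>x i\<bar>)\<^sup>2 + 1"
  have s: "s > 0" "(\<Sum>i<n. \<bar>x i\<bar>)\<^sup>2 < s" unfolding s_def by (auto intro: add_nonneg_pos)
  define e where "e = - bform n A x x / s"
  have e: "e > 0" unfolding e_def using x s by (simp add: divide_neg_pos)
  obtain B where B: "B \<in> cop_cone n" "\<forall>i<n. \<forall>j<n. \<bar>B $$ (i,j) - A $$ (i,j)\<bar> < e"
    using A e unfolding sym_boundary_def by blast
  have "B \<in> carrier_mat n n" "copositive n B" using B(1) by (auto simp: cop_cone_def sym_real_def)
  then have "0 \<le> bform n B x x" using copositive_bformD[of n B x] x(1) by blast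
  moreover have "\<bar>bform n B x x - bform n A x x\<bar> \<le> e * (\<Sum>i<n. \<bar>x i\<bar>)\<^sup>2"
    by (rule bform_perturbation) (use B(2) in force)
  moreover have "e * (\<Sum>i<n. \<bar>x i\<bar>)\<^sup>2 < e * s" using e s by (intro mult_strict_left_mono) auto
  moreover have "e * s = - bform n A x x" unfolding e_def using s by simp
  ultimately show False using x(2) by linarith
qed

definition std_simplex :: "nat \<Rightarrow> (nat \<Rightarrow> real) set" where
  "std_simplex n = {x. (\<forall>i<n. 0 \<le> x i) \<and> (\<forall>i\<ge>n. x i = 0) \<and> (\<Sum>i<n. x i) = 1}"

lemma continuous_on_coordinate [continuous_intros]:
  "continuous_on S (\<lambda>x::nat \<Rightarrow> real. x i)"
  by (rule continuous_on_subset[OF continuous_on_product_coordinates]) simp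

(* In the product topology the simplex is a closed subset of a compact box. *)
lemma compact_std_simplex: "compact (std_simplex n)"
proof -
  define S :: "nat \<Rightarrow> real set" where "S i = (if i < n then {0..1} else {0})" for i
  have "std_simplex n = Pi\<^sub>E UNIV S \<inter> {x. (\<Sum>i<n. x i) = 1}"
  proof (intro equalityI subsetI)
    fix x assume x: "x \<in> std_simplex n"
    have "x i \<le> 1" if "i < n" for i
    proof -
      have "x i \<le> (\<Sum>i<n. x i)"
        using x that by (intro member_le_sum) (auto simp: std_simplex_def)
      then show ?thesis using x by (simp add: std_simplex_def)
    qed
    then show "x \<in> Pi\<^sub>E UNIV S \<inter> {x. (\<Sum>i<n. x i) = 1}"
      using x by (auto simp: std_simplex_def S_def PiE_UNIV_domain)
  next
    fix x assume x: "x \<in> Pi\<^sub>E UNIV S \<inter> {x. (\<Sum>i<n. x i) = 1}"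
    then have xS: "x i \<in> S i" for i by (auto simp: PiE_UNIV_domain)
    have "0 \<le> x i" if "i < n" for i using xS[of i] that by (simp add: S_def)
    moreover have "x i = 0" if "n \<le> i" for i using xS[of i] that by (simp add: S_def)
    ultimately have "\<forall>i<n. 0 \<le> x i" "\<forall>i\<ge>n. x i = 0" by auto
    then show "x \<in> std_simplex n" using x by (simp add: std_simplex_def)
  qed
  moreover have "compactin (product_topology (\<lambda>i. euclidean) UNIV) (Pi\<^sub>E UNIV S)"
    unfolding compactin_PiE by (auto simp: S_def)
  then have "compact (Pi\<^sub>E UNIV S)" unfolding euclidean_product_topology by simp
  moreover have "closed {x::nat \<Rightarrow> real. (\<Sum>i<n. x i) = 1}"
    by (rule closed_Collect_eq) (intro continuous_intros)+
  ultimately show ?thesis by (simp add: compact_Int_closed)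
qed

lemma bform_attains_min_on_simplex:
  assumes "n \<ge> 1"
  shows "\<exists>x0\<in>std_simplex n. \<forall>y\<in>std_simplex n. bform n A x0 x0 \<le> bform n A y y"
proof -
  have "(\<lambda>i. if i = 0 then 1 else 0) \<in> std_simplex n"
    using assms by (auto simp: std_simplex_def)
  then have "std_simplex n \<noteq> {}" by blast
  moreover have "continuous_on (std_simplex n) (\<lambda>x. bform n A x x)"
    unfolding bform_def by (intro continuous_intros)
  ultimately show ?thesis
    using continuous_attains_inf[OF compact_std_simplex] by blast
qed

lemma simplex_rescaling:
  assumes y: "\<forall>i<n. 0 \<le> y i" and j: "j < n" "y j \<noteq> 0"
  shows "\<exists>z\<in>std_simplex n. \<exists>c>0. bform n A z z = c * bform n A y y"
proof -
  define s where "s = (\<Sum>i<n. y i)"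
  have s: "s > 0" unfolding s_def using y j by (intro sum_pos2[of _ j]) auto
  define z where "z i = (if i < n then y i / s else 0)" for i
  have "(\<Sum>i<n. z i) = (\<Sum>i<n. y i) / s"
    unfolding z_def by (simp add: sum_divide_distrib)
  then have "z \<in> std_simplex n" using y s by (auto simp: std_simplex_def z_def s_def)
  moreover have "bform n A z z = (1/s) * ((1/s) * bform n A y y)"
  proof -
    have "bform n A z z = bform n A (\<lambda>i. (1/s) * y i) (\<lambda>i. (1/s) * y i)"
      by (intro bform_cong) (auto simp: z_def)
    then show ?thesis by (simp only: bform_scale_left bform_scale_right)
  qed
  ultimately show ?thesis using s by (intro bexI[of _ z] exI[of _ "(1/s) * (1/s)"]) auto
qed

(* If x'Ax >= c > 0 on the simplex, all matrices entrywise c/2-close to A are copositive,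
   i.e. A is an interior point of the cone. *)
lemma copositive_near_strictly_copositive:
  assumes B: "B \<in> carrier_mat n n" and c: "c > 0"
    and pos: "\<And>z. z \<in> std_simplex n \<Longrightarrow> c \<le> bform n A z z"
    and close: "\<And>i j. i < n \<Longrightarrow> j < n \<Longrightarrow> \<bar>B $$ (i,j) - A $$ (i,j)\<bar> \<le> c/2"
  shows "copositive n B"
proof (rule ccontr)
  assume "\<not> copositive n B"
  then obtain y where y: "\<forall>i<n. 0 \<le> y i" "bform n B y y < 0"
    unfolding copositive_iff_bform[OF B] by (auto simp: not_le)
  have "\<exists>j<n. y j \<noteq> 0"
  proof (rule ccontr)
    assume "\<not> (\<exists>j<n. y j \<noteq> 0)"
    then have "bform n B y y = 0" by (intro bform_zero_left) auto
    with y(2) show False by simp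
  qed
  then obtain z c' where z: "z \<in> std_simplex n" "c' > 0" "bform n B z z = c' * bform n B y y"
    using simplex_rescaling[OF y(1)] by blast
  have "bform n B z z < 0" using z(2,3) y(2) by (simp add: mult_pos_neg)
  moreover have "c \<le> bform n A z z" using pos[OF z(1)] .
  moreover have "\<bar>bform n B z z - bform n A z z\<bar> \<le> c/2 * (\<Sum>i<n. \<bar>z i\<bar>)\<^sup>2"
    by (rule bform_perturbation[OF close])
  moreover have "(\<Sum>i<n. \<bar>z i\<bar>) = 1" using z(1) by (simp add: std_simplex_def)
  ultimately show False using c by simp
qed

(* A boundary matrix is not strictly copositive: its quadratic form has a zero on the
   simplex. *)
lemma boundary_nonneg_zero:
  assumes A: "A \<in> sym_boundary n (cop_cone n)" and n: "n \<ge> 1"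
  shows "\<exists>x. (\<forall>i<n. 0 \<le> x i) \<and> (\<exists>i<n. x i \<noteq> 0) \<and> bform n A x x = 0"
proof -
  have A_carrier: "A \<in> carrier_mat n n" using A by (simp add: sym_boundary_def sym_real_def)
  obtain x0 where x0: "x0 \<in> std_simplex n"
      and min: "\<And>y. y \<in> std_simplex n \<Longrightarrow> bform n A x0 x0 \<le> bform n A y y"
    using bform_attains_min_on_simplex[OF n] by blast
  have x0_nonneg: "\<forall>i<n. 0 \<le> x0 i" using x0 by (simp add: std_simplex_def)
  have "\<exists>i<n. x0 i \<noteq> 0"
  proof (rule ccontr)
    assume "\<not> (\<exists>i<n. x0 i \<noteq> 0)"
    then show False using x0 by (simp add: std_simplex_def)
  qed
  moreover have "bform n A x0 x0 = 0"
  proof (rule ccontr)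
    assume "bform n A x0 x0 \<noteq> 0"
    moreover have "0 \<le> bform n A x0 x0"
      by (rule copositive_bformD[OF boundary_copositive[OF A] A_carrier x0_nonneg])
    ultimately have c: "bform n A x0 x0 > 0" by simp
    then have "bform n A x0 x0 / 2 > 0" by simp
    then obtain B where B: "B \<in> sym_real n - cop_cone n"
        "\<forall>i<n. \<forall>j<n. \<bar>B $$ (i,j) - A $$ (i,j)\<bar> < bform n A x0 x0 / 2"
      using A unfolding sym_boundary_def by blast
    have "copositive n B"
    proof (rule copositive_near_strictly_copositive[OF _ c])
      show "B \<in> carrier_mat n n" using B(1) by (simp add: sym_real_def)
      show "bform n A x0 x0 \<le> bform n A z z" if "z \<in> std_simplex n" for z
        using min[OF that] .
      show "\<bar>B $$ (i,j) - A $$ (i,j)\<bar> \<le> bform n A x0 x0 / 2" if "i < n" "j < n" for i j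
        using B(2) that by (simp add: less_imp_le)
    qed
    then show False using B(1) by (simp add: cop_cone_def)
  qed
  ultimately show ?thesis using x0_nonneg by blast
qed

section \<open>First-order optimality at a zero\<close>

lemma vanishing_linear_coefficient:
  fixes g a c :: real
  assumes c: "c > 0" and nonneg: "\<And>t. \<bar>t\<bar> \<le> c \<Longrightarrow> 0 \<le> 2 * t * g + t\<^sup>2 * a"
  shows "g = 0"
proof -
  have not_pos: "\<not> g > 0" if nonneg: "\<And>t. \<bar>t\<bar> \<le> c \<Longrightarrow> 0 \<le> 2 * t * g + t\<^sup>2 * a" for g
  proof
    assume g: "g > 0"
    define s where "s = min c (g / (\<bar>a\<bar> + 1))"
    have s: "0 < s" "s \<le> c" using c g unfolding s_def by auto
    have "s \<le> g / (\<bar>a\<bar> + 1)" unfolding s_def by simp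
    then have "s * (\<bar>a\<bar> + 1) \<le> g" by (simp add: pos_le_divide_eq add_nonneg_pos)
    then have "s * \<bar>a\<bar> \<le> g - s" by (simp add: algebra_simps)
    moreover have "s * a \<le> s * \<bar>a\<bar>" using s(1) by (intro mult_left_mono) auto
    ultimately have "s * a \<le> g" using s(1) by linarith
    then have "s * (s * a) \<le> s * g" using s(1) by (intro mult_left_mono) auto
    moreover have "0 \<le> 2 * (- s) * g + (- s)\<^sup>2 * a" using nonneg[of "- s"] s by simp
    ultimately show False using s(1) g by (simp add: power2_eq_square algebra_simps)
  qed
  have "\<not> g > 0" by (rule not_pos[OF nonneg])
  moreover have "\<not> - g > 0"
  proof (rule not_pos)
    fix t :: real assume "\<bar>t\<bar> \<le> c"
    then show "0 \<le> 2 * t * - g + t\<^sup>2 * a" using nonneg[of "- t"] by simp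
  qed
  ultimately show ?thesis by simp
qed

(* At a nonnegative zero x of a copositive form, (Ax)_j = 0 wherever x_j > 0: moving x a
   little in direction e_j keeps it nonnegative. *)
lemma copositive_zero_critical:
  assumes A: "A \<in> sym_real n" and cop: "copositive n A"
    and x: "\<forall>i<n. 0 \<le> x i" "bform n A x x = 0" and j: "j < n" "x j > 0"
  shows "(\<Sum>l<n. A $$ (j,l) * x l) = 0"
proof -
  have sym: "\<And>i k. i < n \<Longrightarrow> k < n \<Longrightarrow> A $$ (i,k) = A $$ (k,i)"
    using sym_real_entry_sym[OF A] by blast
  have A_carrier: "A \<in> carrier_mat n n" using A by (simp add: sym_real_def)
  define d :: "nat \<Rightarrow> real" where "d i = (if i = j then 1 else 0)" for i
  have "bform n A x d = (\<Sum>i<n. x i * A $$ (i,j))"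
    unfolding d_def by (rule bform_unit_right[OF j(1)])
  also have "\<dots> = (\<Sum>l<n. A $$ (j,l) * x l)"
    using sym j(1) by (intro sum.cong refl) (simp add: mult.commute)
  finally have xd: "bform n A x d = (\<Sum>l<n. A $$ (j,l) * x l)" .
  have dd: "bform n A d d = A $$ (j,j)"
    unfolding d_def bform_unit_right[OF j(1)]
    using j(1) by (simp add: if_distrib[of "\<lambda>c. c * _"] cong: if_cong)
  show ?thesis
  proof (rule vanishing_linear_coefficient[OF j(2)])
    fix t :: real assume t: "\<bar>t\<bar> \<le> x j"
    have "\<forall>i<n. 0 \<le> x i + t * d i" using x(1) t by (auto simp: d_def)
    then have "0 \<le> bform n A (\<lambda>i. x i + t * d i) (\<lambda>i. x i + t * d i)"
      by (rule copositive_bformD[OF cop A_carrier])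
    then show "0 \<le> 2 * t * (\<Sum>l<n. A $$ (j,l) * x l) + t\<^sup>2 * A $$ (j,j)"
      using bform_line[OF sym, where x = x and t = t and d = d] x(2) xd dd by simp
  qed
qed

(* Every boundary matrix has a singular principal submatrix: the one on the support of a
   nonnegative zero of its quadratic form. *)
lemma boundary_singular_minor:
  assumes A: "A \<in> sym_boundary n (cop_cone n)" and n: "n \<ge> 1"
  shows "\<exists>I \<in> principal_index_sets n. det (submatrix (map_mat complex_of_real A) I I) = 0"
proof -
  have A_sym: "A \<in> sym_real n" using A by (simp add: sym_boundary_def)
  then have A_carrier: "A \<in> carrier_mat n n" by (simp add: sym_real_def)
  obtain x where x: "\<forall>i<n. 0 \<le> x i" "\<exists>i<n. x i \<noteq> 0" "bform n A x x = 0"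
    using boundary_nonneg_zero[OF A n] by blast
  define J where "J = {i. i < n \<and> x i > 0}"
  have J: "J \<subseteq> {..<n}" "J \<noteq> {}" using x(1,2) unfolding J_def by force+
  have critical: "(\<Sum>j\<in>J. A $$ (i,j) * x j) = 0" if "i \<in> J" for i
  proof -
    have "(\<Sum>j\<in>J. A $$ (i,j) * x j) = (\<Sum>l<n. A $$ (i,l) * x l)"
    proof (rule sum.mono_neutral_left)
      show "\<forall>l\<in>{..<n} - J. A $$ (i,l) * x l = 0" using x(1) unfolding J_def by force
    qed (use J in auto)
    also have "\<dots> = 0"
      using copositive_zero_critical[OF A_sym boundary_copositive[OF A] x(1) x(3)] that
      unfolding J_def by blast
    finally show ?thesis .
  qed
  have "det (submatrix (map_mat complex_of_real A) J J) = 0"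
    unfolding det_submatrix_eq_0_iff[OF map_carrier_mat[THEN iffD2, OF A_carrier] J(1)]
  proof (intro exI conjI ballI)
    show "\<exists>j\<in>J. complex_of_real (x j) \<noteq> 0" using J(2) unfolding J_def by force
    fix i assume i: "i \<in> J"
    have "map_mat complex_of_real A $$ (i,j) = of_real (A $$ (i,j))" if "j \<in> J" for j
    proof -
      have "i < n" "j < n" using i that J(1) by auto
      then show ?thesis using A_carrier by simp
    qed
    then have "(\<Sum>j\<in>J. map_mat complex_of_real A $$ (i,j) * complex_of_real (x j)) =
        of_real (\<Sum>j\<in>J. A $$ (i,j) * x j)"
      by simp
    then show "(\<Sum>j\<in>J. map_mat complex_of_real A $$ (i,j) * complex_of_real (x j)) = 0"
      using critical[OF i] by simp
  qed
  then show ?thesis using J by blast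
qed

lemma boundary_subset_minor_hypersurface:
  assumes "n \<ge> 1"
  shows "map_mat complex_of_real ` sym_boundary n (cop_cone n) \<subseteq> minor_hypersurface n"
proof
  fix C assume "C \<in> map_mat complex_of_real ` sym_boundary n (cop_cone n)"
  then obtain B where B: "B \<in> sym_boundary n (cop_cone n)" "C = map_mat complex_of_real B"
    by blast
  have "B \<in> sym_real n" using B(1) by (simp add: sym_boundary_def)
  then have "C \<in> sym_complex n"
    using B(2) by (auto simp: sym_real_def sym_complex_def map_mat_transpose)
  then show "C \<in> minor_hypersurface n"
    unfolding minor_hypersurface_iff using boundary_singular_minor[OF B(1) assms] B(2) by blast
qed

section \<open>Matrices with a prescribed kernel vector on a principal block\<close>

definition sym_upper :: "(nat \<Rightarrow> nat \<Rightarrow> 'a) \<Rightarrow> nat \<Rightarrow> nat \<Rightarrow> 'a" where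
  "sym_upper M i j = M (min i j) (max i j)"

lemma sym_upper_commute: "sym_upper M i j = sym_upper M j i"
  unfolding sym_upper_def by (simp add: min.commute max.commute)

definition kernel_vec :: "nat set \<Rightarrow> nat \<Rightarrow> (nat \<Rightarrow> 'a::comm_ring_1) \<Rightarrow> nat \<Rightarrow> 'a" where
  "kernel_vec I k w j = (if j = k then 1 else if j \<in> I - {k} then w j else 0)"

(* Phi_{I,k}(M,w): the entries of sym_upper M away from row and column k, and row and
   column k within I chosen so that kernel_vec I k w annihilates the rows indexed by I.
   All entries are polynomials in M and w. *)
definition param_entry ::
    "nat set \<Rightarrow> nat \<Rightarrow> (nat \<Rightarrow> nat \<Rightarrow> 'a::comm_ring_1) \<Rightarrow> (nat \<Rightarrow> 'a) \<Rightarrow> nat \<Rightarrow> nat \<Rightarrow> 'a" where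
  "param_entry I k M w i j =
    (if i = k \<and> j = k then (\<Sum>a\<in>I-{k}. \<Sum>b\<in>I-{k}. sym_upper M a b * w a * w b)
     else if i = k \<and> j \<in> I-{k} then - (\<Sum>b\<in>I-{k}. sym_upper M j b * w b)
     else if j = k \<and> i \<in> I-{k} then - (\<Sum>b\<in>I-{k}. sym_upper M i b * w b)
     else sym_upper M i j)"

definition param_mat ::
    "nat \<Rightarrow> nat set \<Rightarrow> nat \<Rightarrow> (nat \<Rightarrow> nat \<Rightarrow> 'a::comm_ring_1) \<Rightarrow> (nat \<Rightarrow> 'a) \<Rightarrow> 'a mat" where
  "param_mat n I k M w = Matrix.mat n n (\<lambda>(i,j). param_entry I k M w i j)"

lemma param_mat_carrier: "param_mat n I k M w \<in> carrier_mat n n"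
  unfolding param_mat_def by simp

lemma param_mat_index: "i < n \<Longrightarrow> j < n \<Longrightarrow> param_mat n I k M w $$ (i,j) = param_entry I k M w i j"
  unfolding param_mat_def by simp

lemma param_entry_commute: "param_entry I k M w i j = param_entry I k M w j i"
  unfolding param_entry_def by (auto simp: sym_upper_commute)

lemma param_entry_off_k: "i \<noteq> k \<Longrightarrow> j \<noteq> k \<Longrightarrow> param_entry I k M w i j = sym_upper M i j"
  unfolding param_entry_def by auto

lemma param_mat_of_real:
  "map_mat complex_of_real (param_mat n I k M w) =
    param_mat n I k (\<lambda>i j. complex_of_real (M i j)) (\<lambda>i. complex_of_real (w i))"
  by (rule eq_matI) (auto simp: param_mat_def param_entry_def sym_upper_def)

lemma sum_kernel_vec:
  assumes "finite I" "k \<in> I"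
  shows "(\<Sum>j\<in>I. f j * kernel_vec I k w j) = f k + (\<Sum>b\<in>I-{k}. f b * w b)"
proof -
  have "(\<Sum>j\<in>I. f j * kernel_vec I k w j) =
      f k * kernel_vec I k w k + (\<Sum>b\<in>I-{k}. f b * kernel_vec I k w b)"
    by (rule sum.remove[OF assms])
  also have "(\<Sum>b\<in>I-{k}. f b * kernel_vec I k w b) = (\<Sum>b\<in>I-{k}. f b * w b)"
    by (intro sum.cong) (auto simp: kernel_vec_def)
  finally show ?thesis by (simp add: kernel_vec_def)
qed

lemma param_entry_kernel:
  assumes fin: "finite I" and k: "k \<in> I" and i: "i \<in> I"
  shows "(\<Sum>j\<in>I. param_entry I k M w i j * kernel_vec I k w j) = 0"
proof -
  let ?K = "I - {k}"
  have "(\<Sum>j\<in>I. param_entry I k M w i j * kernel_vec I k w j) =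
      param_entry I k M w i k + (\<Sum>j\<in>?K. param_entry I k M w i j * w j)"
    by (rule sum_kernel_vec[OF fin k])
  also have "\<dots> = 0"
  proof (cases "i = k")
    case True
    have "(\<Sum>j\<in>?K. param_entry I k M w i j * w j) =
        (\<Sum>j\<in>?K. - ((\<Sum>b\<in>?K. sym_upper M j b * w b) * w j))"
      using True by (intro sum.cong) (auto simp: param_entry_def)
    also have "\<dots> = - (\<Sum>j\<in>?K. \<Sum>b\<in>?K. sym_upper M j b * w j * w b)"
      by (simp only: sum_negf sum_distrib_right) (simp add: mult_ac)
    finally show ?thesis using True by (simp add: param_entry_def)
  next
    case False
    then have "i \<in> ?K" using i by simp
    moreover have "(\<Sum>j\<in>?K. param_entry I k M w i j * w j) = (\<Sum>j\<in>?K. sym_upper M i j * w j)"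
      using False by (auto simp: param_entry_off_k intro!: sum.cong)
    ultimately show ?thesis using False by (simp add: param_entry_def)
  qed
  finally show ?thesis .
qed

lemma param_mat_reproduces:
  fixes A :: "'a::comm_ring_1 mat"
  assumes A: "A \<in> carrier_mat n n" "A\<^sup>T = A" and I: "I \<subseteq> {..<n}" and k: "k \<in> I"
    and ker: "\<And>i. i \<in> I \<Longrightarrow> (\<Sum>j\<in>I. A $$ (i,j) * kernel_vec I k w j) = 0"
  shows "param_mat n I k (\<lambda>i j. A $$ (i,j)) w = A"
proof -
  let ?K = "I - {k}" and ?A = "\<lambda>i j. A $$ (i,j)"
  have fin: "finite I" using I finite_subset by blast
  have in_range: "i \<in> I \<Longrightarrow> i < n" for i using I by auto
  have sym: "A $$ (i,j) = A $$ (j,i)" if "i < n" "j < n" for i j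
  proof -
    have "A\<^sup>T $$ (i,j) = A $$ (j,i)" using A(1) that by simp
    then show ?thesis using A(2) by simp
  qed
  have upper: "sym_upper ?A i j = A $$ (i,j)" if "i < n" "j < n" for i j
    unfolding sym_upper_def using sym[OF that] by (cases "i \<le> j") (auto simp: min_def max_def)
  have upper_sum: "(\<Sum>b\<in>?K. sym_upper ?A i b * w b) = (\<Sum>b\<in>?K. A $$ (i,b) * w b)"
    if "i < n" for i
    using that in_range by (intro sum.cong) (auto simp: upper)
  have col: "A $$ (i,k) = - (\<Sum>b\<in>?K. A $$ (i,b) * w b)" if "i \<in> I" for i
    using ker[OF that] unfolding sum_kernel_vec[OF fin k] by (simp add: eq_neg_iff_add_eq_0)
  have row: "A $$ (k,j) = - (\<Sum>b\<in>?K. A $$ (j,b) * w b)" if "j \<in> I" for j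
    using col[OF that] sym[OF in_range[OF k] in_range[OF that]] by simp
  have corner: "A $$ (k,k) = (\<Sum>a\<in>?K. \<Sum>b\<in>?K. sym_upper ?A a b * w a * w b)"
  proof -
    have "(\<Sum>b\<in>?K. A $$ (k,b) * w b) = (\<Sum>b\<in>?K. - (\<Sum>a\<in>?K. A $$ (b,a) * w a * w b))"
      by (intro sum.cong refl) (simp add: row sum_distrib_right)
    then have "A $$ (k,k) = (\<Sum>b\<in>?K. \<Sum>a\<in>?K. A $$ (b,a) * w a * w b)"
      using col[OF k] by (simp add: sum_negf)
    also have "\<dots> = (\<Sum>a\<in>?K. \<Sum>b\<in>?K. A $$ (b,a) * w a * w b)" by (rule sum.swap)
    also have "\<dots> = (\<Sum>a\<in>?K. \<Sum>b\<in>?K. sym_upper ?A a b * w a * w b)"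
      by (intro sum.cong refl) (auto simp: upper in_range sym)
    finally show ?thesis .
  qed
  show ?thesis
  proof (rule eq_matI)
    fix i j assume "i < dim_row A" "j < dim_col A"
    then have ij: "i < n" "j < n" using A(1) by auto
    consider "i = k" "j = k" | "i = k" "j \<in> ?K" | "j = k" "i \<in> ?K"
      | "\<not> (i = k \<and> j = k)" "\<not> (i = k \<and> j \<in> ?K)" "\<not> (j = k \<and> i \<in> ?K)"
      by blast
    then have "param_entry I k ?A w i j = A $$ (i,j)"
      by cases (auto simp: param_entry_def corner row col upper_sum ij upper)
    then show "param_mat n I k ?A w $$ (i,j) = A $$ (i,j)" by (simp add: param_mat_index ij)
  qed (use A(1) in \<open>auto simp: param_mat_def\<close>)
qed

lemma param_mat_sym_real:
  fixes M :: "nat \<Rightarrow> nat \<Rightarrow> real"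
  shows "param_mat n I k M w \<in> sym_real n"
  unfolding sym_real_def
  by (auto simp: param_mat_def param_entry_commute)

lemma param_mat_row_kernel_vec:
  fixes M :: "nat \<Rightarrow> nat \<Rightarrow> real"
  assumes I: "I \<subseteq> {..<n}" and k: "k \<in> I" and i: "i < n"
  shows "(\<Sum>j<n. param_mat n I k M w $$ (i,j) * kernel_vec I k w j) =
         (if i \<in> I then 0 else (\<Sum>j\<in>I. sym_upper M i j * kernel_vec I k w j))"
proof -
  have fin: "finite I" using I finite_subset by blast
  have "(\<Sum>j<n. param_mat n I k M w $$ (i,j) * kernel_vec I k w j) =
      (\<Sum>j<n. param_entry I k M w i j * kernel_vec I k w j)"
    using i by (intro sum.cong) (auto simp: param_mat_index)
  also have "\<dots> = (\<Sum>j\<in>I. param_entry I k M w i j * kernel_vec I k w j)"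
    using I k by (intro sum.mono_neutral_right) (auto simp: kernel_vec_def)
  also have "\<dots> = (if i \<in> I then 0 else (\<Sum>j\<in>I. sym_upper M i j * kernel_vec I k w j))"
  proof (cases "i \<in> I")
    case True
    then show ?thesis using param_entry_kernel[OF fin k] by simp
  next
    case False
    then have "param_entry I k M w i j = sym_upper M i j" for j
      using k unfolding param_entry_def by auto
    then show ?thesis using False by simp
  qed
  finally show ?thesis .
qed

lemma bform_param_mat_kernel_vec:
  fixes M :: "nat \<Rightarrow> nat \<Rightarrow> real"
  assumes "I \<subseteq> {..<n}" "k \<in> I"
  shows "bform n (param_mat n I k M w) y (kernel_vec I k w) =
    (\<Sum>i<n. if i \<in> I then 0 else y i * (\<Sum>j\<in>I. sym_upper M i j * kernel_vec I k w j))"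
  unfolding bform_row using param_mat_row_kernel_vec[OF assms] by (intro sum.cong) auto

section \<open>Boundary points from the parametrisation\<close>

(* A copositive matrix whose form has a nonzero nonnegative zero u lies on the boundary:
   subtracting (e/2) Id makes the form negative at u. *)
lemma copositive_with_zero_in_boundary:
  assumes A: "A \<in> sym_real n" and cop: "copositive n A"
    and u: "\<forall>i<n. 0 \<le> u i" "j < n" "u j \<noteq> 0" and zero: "bform n A u u = 0"
  shows "A \<in> sym_boundary n (cop_cone n)"
  unfolding sym_boundary_def
proof (intro CollectI conjI allI impI A)
  have sym: "\<And>i j. i < n \<Longrightarrow> j < n \<Longrightarrow> A $$ (i,j) = A $$ (j,i)"
    using sym_real_entry_sym[OF A] by blast
  fix e :: real assume e: "e > 0"
  show "\<exists>B\<in>cop_cone n. \<forall>i<n. \<forall>j<n. \<bar>B $$ (i,j) - A $$ (i,j)\<bar> < e"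
    using A cop e by (intro bexI[of _ A]) (auto simp: cop_cone_def)
  define B where "B = Matrix.mat n n (\<lambda>(i,j). A $$ (i,j) - (if i = j then e/2 else 0))"
  have B: "B \<in> carrier_mat n n" unfolding B_def by simp
  have B_index: "i < n \<Longrightarrow> j < n \<Longrightarrow> B $$ (i,j) = A $$ (i,j) - (if i = j then e/2 else 0)"
    for i j unfolding B_def by simp
  have "B \<in> sym_real n" unfolding sym_real_def using B by (auto simp: B_index sym)
  moreover have "\<not> copositive n B"
  proof -
    have "bform n B u u =
        (\<Sum>i<n. \<Sum>j<n. u i * A $$ (i,j) * u j - (if i = j then e/2 * (u i * u j) else 0))"
      unfolding bform_def by (intro sum.cong refl) (auto simp: B_index algebra_simps)
    also have "\<dots> = bform n A u u - e/2 * (\<Sum>i<n. u i * u i)"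
      unfolding bform_def by (simp add: sum_subtractf sum_distrib_left)
    also have "\<dots> < 0"
    proof -
      have "u j * u j \<le> (\<Sum>i<n. u i * u i)" using u(2) by (intro member_le_sum) auto
      moreover have "0 < u j * u j" using u(3) by (simp flip: power2_eq_square)
      ultimately show ?thesis using zero e by simp
    qed
    finally show ?thesis unfolding copositive_iff_bform[OF B] using u(1) by (auto simp: not_le)
  qed
  ultimately have "B \<in> sym_real n - cop_cone n" by (simp add: cop_cone_def)
  moreover have "\<forall>i<n. \<forall>j<n. \<bar>B $$ (i,j) - A $$ (i,j)\<bar> < e" using e by (simp add: B_index)
  ultimately show "\<exists>B\<in>sym_real n - cop_cone n. \<forall>i<n. \<forall>j<n. \<bar>B $$ (i,j) - A $$ (i,j)\<bar> < e"
    by blast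
qed

(* For entrywise nonnegative M and w, with sym_upper M positive semidefinite on the
   hyperplane x_k = 0, the matrix Phi_{I,k}(M,w) is copositive: writing x = y + x_k u with
   y_k = 0, the cross term is nonnegative and the u-term vanishes. *)
lemma param_mat_copositive:
  fixes M :: "nat \<Rightarrow> nat \<Rightarrow> real"
  assumes I: "I \<subseteq> {..<n}" and k: "k \<in> I"
    and M_nonneg: "\<And>i j. i < n \<Longrightarrow> j < n \<Longrightarrow> 0 \<le> sym_upper M i j"
    and w_nonneg: "\<And>i. i < n \<Longrightarrow> 0 \<le> w i"
    and psd: "\<And>y. y k = 0 \<Longrightarrow> 0 \<le> (\<Sum>i<n. \<Sum>j<n. y i * sym_upper M i j * y j)"
  shows "copositive n (param_mat n I k M w)"
proof -
  let ?A = "param_mat n I k M w" and ?u = "kernel_vec I k w"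
  have kn: "k < n" using I k by auto
  have sym: "\<And>i j. i < n \<Longrightarrow> j < n \<Longrightarrow> ?A $$ (i,j) = ?A $$ (j,i)"
    using sym_real_entry_sym[OF param_mat_sym_real] by blast
  have u_nonneg: "i < n \<Longrightarrow> 0 \<le> ?u i" for i using w_nonneg by (simp add: kernel_vec_def)
  have u_out: "i \<notin> I \<Longrightarrow> ?u i = 0" for i using k by (auto simp: kernel_vec_def)
  have uu: "bform n ?A ?u ?u = 0"
    unfolding bform_param_mat_kernel_vec[OF I k] by (intro sum.neutral) (simp add: u_out)
  show ?thesis unfolding copositive_iff_bform[OF param_mat_carrier]
  proof (intro allI impI)
    fix x :: "nat \<Rightarrow> real" assume x: "\<forall>i<n. 0 \<le> x i"
    define t where "t = x k"
    define y where "y i = x i - t * ?u i" for i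
    have "bform n ?A x x = bform n ?A (\<lambda>i. y i + t * ?u i) (\<lambda>i. y i + t * ?u i)"
      by (rule bform_cong) (simp_all add: y_def)
    also have "\<dots> = bform n ?A y y + 2 * t * bform n ?A y ?u"
      using bform_line[OF sym, where x = y and t = t and d = ?u] uu by simp
    finally have expand: "bform n ?A x x = bform n ?A y y + 2 * t * bform n ?A y ?u" .
    have "0 \<le> bform n ?A y ?u"
      unfolding bform_param_mat_kernel_vec[OF I k]
      using x u_out M_nonneg u_nonneg I
      by (intro sum_nonneg) (auto simp: y_def intro!: mult_nonneg_nonneg sum_nonneg)
    moreover have "0 \<le> bform n ?A y y"
    proof -
      have yk: "y k = 0" unfolding y_def t_def by (simp add: kernel_vec_def)
      have "bform n ?A y y = (\<Sum>i<n. \<Sum>j<n. y i * sym_upper M i j * y j)"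
        unfolding bform_def
      proof (intro sum.cong refl)
        fix i j assume "i \<in> {..<n}" "j \<in> {..<n}"
        then show "y i * ?A $$ (i,j) * y j = y i * sym_upper M i j * y j"
          using yk by (cases "i = k \<or> j = k") (auto simp: param_mat_index param_entry_off_k)
      qed
      then show ?thesis using psd[of y, OF yk] by simp
    qed
    moreover have "0 \<le> t" using x kn unfolding t_def by simp
    ultimately show "0 \<le> bform n ?A x x" unfolding expand by simp
  qed
qed

lemma param_mat_in_boundary:
  fixes M :: "nat \<Rightarrow> nat \<Rightarrow> real"
  assumes I: "I \<subseteq> {..<n}" and k: "k \<in> I"
    and M_nonneg: "\<And>i j. i < n \<Longrightarrow> j < n \<Longrightarrow> 0 \<le> sym_upper M i j"
    and w_nonneg: "\<And>i. i < n \<Longrightarrow> 0 \<le> w i"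
    and psd: "\<And>y. y k = 0 \<Longrightarrow> 0 \<le> (\<Sum>i<n. \<Sum>j<n. y i * sym_upper M i j * y j)"
  shows "param_mat n I k M w \<in> sym_boundary n (cop_cone n)"
proof (rule copositive_with_zero_in_boundary)
  show "param_mat n I k M w \<in> sym_real n" by (rule param_mat_sym_real)
  show "copositive n (param_mat n I k M w)" by (rule param_mat_copositive[OF assms])
  show "\<forall>i<n. 0 \<le> kernel_vec I k w i" using w_nonneg by (simp add: kernel_vec_def)
  show "k < n" "kernel_vec I k w k \<noteq> 0" using I k by (auto simp: kernel_vec_def)
  show "bform n (param_mat n I k M w) (kernel_vec I k w) (kernel_vec I k w) = 0"
    unfolding bform_param_mat_kernel_vec[OF I k]
    using k by (intro sum.neutral) (auto simp: kernel_vec_def)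
qed

(* |y_i| |y_j| <= max(y_i^2, y_j^2) <= |y|^2. *)
lemma abs_mult_le_sum_squares:
  fixes y :: "nat \<Rightarrow> real"
  assumes "i < n" "j < n"
  shows "\<bar>y i\<bar> * \<bar>y j\<bar> \<le> (\<Sum>l<n. y l * y l)"
proof -
  have "\<bar>y i\<bar> * \<bar>y j\<bar> \<le> y i * y i \<or> \<bar>y i\<bar> * \<bar>y j\<bar> \<le> y j * y j"
  proof (cases "\<bar>y i\<bar> \<le> \<bar>y j\<bar>")
    case True
    then have "\<bar>y i\<bar> * \<bar>y j\<bar> \<le> \<bar>y j\<bar> * \<bar>y j\<bar>" by (intro mult_right_mono) auto
    then show ?thesis by simp
  next
    case False
    then have "\<bar>y i\<bar> * \<bar>y j\<bar> \<le> \<bar>y i\<bar> * \<bar>y i\<bar>" by (intro mult_left_mono) auto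
    then show ?thesis by simp
  qed
  moreover have "y i * y i \<le> (\<Sum>l<n. y l * y l)" "y j * y j \<le> (\<Sum>l<n. y l * y l)"
    using assms by (auto intro!: member_le_sum)
  ultimately show ?thesis by linarith
qed

lemma ones_plus_id_perturbation_psd:
  fixes E :: "nat \<Rightarrow> nat \<Rightarrow> real"
  assumes E: "(\<Sum>i<n. \<Sum>j<n. \<bar>E i j\<bar>) \<le> 1"
  shows "0 \<le> (\<Sum>i<n. \<Sum>j<n. y i * (1 + (if i = j then 1 else 0) + E i j) * y j)"
proof -
  define S2 where "S2 = (\<Sum>l<n. y l * y l)"
  define T where "T = (\<Sum>i<n. \<Sum>j<n. y i * E i j * y j)"
  have "(\<Sum>i<n. \<Sum>j<n. y i * (1 + (if i = j then 1 else 0) + E i j) * y j) =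
      (\<Sum>i<n. \<Sum>j<n. y i * y j + (if i = j then y i * y j else 0) + y i * E i j * y j)"
    by (intro sum.cong refl) (simp add: algebra_simps)
  also have "\<dots> = (\<Sum>i<n. y i)\<^sup>2 + S2 + T"
    unfolding S2_def T_def power2_eq_square sum_product by (simp add: sum.distrib)
  finally have expand: "(\<Sum>i<n. \<Sum>j<n. y i * (1 + (if i = j then 1 else 0) + E i j) * y j) =
      (\<Sum>i<n. y i)\<^sup>2 + S2 + T" .
  have "\<bar>T\<bar> \<le> (\<Sum>i<n. \<Sum>j<n. \<bar>y i * E i j * y j\<bar>)"
    unfolding T_def by (rule order_trans[OF sum_abs]) (intro sum_mono sum_abs)
  also have "\<dots> \<le> (\<Sum>i<n. \<Sum>j<n. \<bar>E i j\<bar> * S2)"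
  proof (intro sum_mono)
    fix i j assume "i \<in> {..<n}" "j \<in> {..<n}"
    then have "\<bar>E i j\<bar> * (\<bar>y i\<bar> * \<bar>y j\<bar>) \<le> \<bar>E i j\<bar> * S2"
      unfolding S2_def by (intro mult_left_mono abs_mult_le_sum_squares) auto
    then show "\<bar>y i * E i j * y j\<bar> \<le> \<bar>E i j\<bar> * S2" by (simp add: abs_mult mult_ac)
  qed
  also have "\<dots> = (\<Sum>i<n. \<Sum>j<n. \<bar>E i j\<bar>) * S2" by (simp add: sum_distrib_right)
  also have "\<dots> \<le> S2"
    using E mult_right_mono[OF E, of S2] unfolding S2_def by (simp add: sum_nonneg)
  finally have "\<bar>T\<bar> \<le> S2" .
  then show ?thesis unfolding expand using zero_le_power2[of "\<Sum>i<n. y i"] by linarith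
qed

definition ones_plus_id :: "nat \<Rightarrow> nat \<Rightarrow> real" where
  "ones_plus_id i j = 1 + (if i = j then 1 else 0)"

lemma param_mat_near_base_in_boundary:
  fixes D :: "nat \<Rightarrow> nat \<Rightarrow> real" and d :: "nat \<Rightarrow> real"
  assumes I: "I \<subseteq> {..<n}" and k: "k \<in> I"
  shows "\<exists>\<delta>>0. \<forall>r. \<bar>r\<bar> < \<delta> \<longrightarrow>
    param_mat n I k (\<lambda>i j. ones_plus_id i j + r * D i j) (\<lambda>i. 1 + r * d i)
      \<in> sym_boundary n (cop_cone n)"
proof -
  define SD where "SD = (\<Sum>i<n. \<Sum>j<n. \<bar>sym_upper D i j\<bar>)"
  define Sd where "Sd = (\<Sum>i<n. \<bar>d i\<bar>)"
  have SD: "0 \<le> SD" unfolding SD_def by (intro sum_nonneg) auto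
  have Sd: "0 \<le> Sd" unfolding Sd_def by (intro sum_nonneg) auto
  define \<delta> where "\<delta> = 1 / (1 + SD + Sd)"
  have \<delta>: "\<delta> > 0" unfolding \<delta>_def using SD Sd by simp
  show ?thesis
  proof (intro exI[of _ \<delta>] conjI allI impI \<delta>)
    fix r :: real assume "\<bar>r\<bar> < \<delta>"
    then have "\<bar>r\<bar> * (1 + SD + Sd) < 1" using SD Sd unfolding \<delta>_def by (simp add: field_simps)
    moreover have "0 \<le> \<bar>r\<bar> * SD" "0 \<le> \<bar>r\<bar> * Sd" using SD Sd by simp_all
    ultimately have r_SD: "\<bar>r\<bar> * SD \<le> 1" and r_Sd: "\<bar>r\<bar> * Sd < 1"
      by (simp_all add: algebra_simps)
    let ?E = "\<lambda>i j. r * sym_upper D i j"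
    have E: "(\<Sum>i<n. \<Sum>j<n. \<bar>?E i j\<bar>) \<le> 1"
      using r_SD unfolding SD_def by (simp add: abs_mult sum_distrib_left)
    have E_entry: "\<bar>?E i j\<bar> \<le> 1" if "i < n" "j < n" for i j
    proof -
      have "\<bar>?E i j\<bar> \<le> (\<Sum>j<n. \<bar>?E i j\<bar>)" using that by (intro member_le_sum) auto
      also have "\<dots> \<le> (\<Sum>i<n. \<Sum>j<n. \<bar>?E i j\<bar>)"
        using that by (intro member_le_sum[of i "{..<n}" "\<lambda>i. \<Sum>j<n. \<bar>?E i j\<bar>"])
          (auto intro: sum_nonneg)
      finally show ?thesis using E by simp
    qed
    have upper: "sym_upper (\<lambda>i j. ones_plus_id i j + r * D i j) i j =
        1 + (if i = j then 1 else 0) + ?E i j" for i j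
      by (auto simp: sym_upper_def ones_plus_id_def min_def max_def)
    show "param_mat n I k (\<lambda>i j. ones_plus_id i j + r * D i j) (\<lambda>i. 1 + r * d i)
        \<in> sym_boundary n (cop_cone n)"
    proof (rule param_mat_in_boundary[OF I k])
      fix i j assume "i < n" "j < n"
      then show "0 \<le> sym_upper (\<lambda>i j. ones_plus_id i j + r * D i j) i j"
        unfolding upper using E_entry[of i j] by (auto simp: abs_le_iff)
    next
      fix i assume "i < n"
      then have "\<bar>d i\<bar> \<le> Sd" unfolding Sd_def by (intro member_le_sum) auto
      then have "\<bar>r * d i\<bar> \<le> \<bar>r\<bar> * Sd" unfolding abs_mult by (intro mult_left_mono) auto
      then show "0 \<le> 1 + r * d i" using r_Sd by linarith
    next
      fix y :: "nat \<Rightarrow> real"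
      show "0 \<le> (\<Sum>i<n. \<Sum>j<n. y i * sym_upper (\<lambda>i j. ones_plus_id i j + r * D i j) i j * y j)"
        unfolding upper by (rule ones_plus_id_perturbation_psd[OF E])
    qed
  qed
qed

section \<open>Polynomial functions restricted to complex lines\<close>

definition upoly_fun :: "(complex \<Rightarrow> complex) \<Rightarrow> bool" where
  "upoly_fun f \<longleftrightarrow> (\<exists>P. \<forall>z. f z = poly P z)"

lemma upoly_fun_const: "upoly_fun (\<lambda>z. c)"
  unfolding upoly_fun_def by (rule exI[of _ "[:c:]"]) simp

lemma upoly_fun_id: "upoly_fun (\<lambda>z. z)"
  unfolding upoly_fun_def by (rule exI[of _ "[:0, 1:]"]) simp

lemma upoly_fun_add: "upoly_fun f \<Longrightarrow> upoly_fun g \<Longrightarrow> upoly_fun (\<lambda>z. f z + g z)"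
  unfolding upoly_fun_def by (metis poly_add)

lemma upoly_fun_mult: "upoly_fun f \<Longrightarrow> upoly_fun g \<Longrightarrow> upoly_fun (\<lambda>z. f z * g z)"
  unfolding upoly_fun_def by (metis poly_mult)

lemma upoly_fun_uminus: "upoly_fun f \<Longrightarrow> upoly_fun (\<lambda>z. - f z)"
  unfolding upoly_fun_def by (metis poly_minus)

lemma upoly_fun_if: "upoly_fun f \<Longrightarrow> upoly_fun g \<Longrightarrow> upoly_fun (\<lambda>z. if P then f z else g z)"
  by (cases P) simp_all

lemma upoly_fun_sum:
  "finite F \<Longrightarrow> (\<And>x. x \<in> F \<Longrightarrow> upoly_fun (f x)) \<Longrightarrow> upoly_fun (\<lambda>z. \<Sum>x\<in>F. f x z)"
proof (induction F rule: finite_induct)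
  case empty
  then show ?case using upoly_fun_const[of 0] by simp
next
  case (insert x F)
  then show ?case using upoly_fun_add[of "f x" "\<lambda>z. \<Sum>x\<in>F. f x z"] by simp
qed

lemma upoly_fun_poly_fun:
  assumes "p \<in> poly_fun n" and "\<And>i j. i < n \<Longrightarrow> j < n \<Longrightarrow> upoly_fun (\<lambda>z. F z $$ (i,j))"
  shows "upoly_fun (\<lambda>z. p (F z))"
  using assms(1)
proof (induction rule: poly_fun.induct)
  case (const c)
  then show ?case by (rule upoly_fun_const)
next
  case (var i j)
  then show ?case using assms(2) by simp
next
  case (add p q)
  from add.IH show ?case by (rule upoly_fun_add)
next
  case (mult p q)
  from mult.IH show ?case by (rule upoly_fun_mult)
qed

lemma upoly_fun_vanishes:
  assumes f: "upoly_fun f" and \<delta>: "\<delta> > 0"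
    and zero: "\<And>r. \<bar>r\<bar> < \<delta> \<Longrightarrow> f (of_real r) = 0"
  shows "f z = 0"
proof -
  obtain P where P: "\<And>z. f z = poly P z" using f unfolding upoly_fun_def by blast
  have "P = 0"
  proof (rule ccontr)
    assume "P \<noteq> 0"
    then have "finite {z. poly P z = 0}" by (rule poly_roots_finite)
    moreover have "complex_of_real ` {-\<delta><..<\<delta>} \<subseteq> {z. poly P z = 0}"
      using zero P by (auto simp: abs_less_iff)
    ultimately have "finite (complex_of_real ` {-\<delta><..<\<delta>})" using finite_subset by blast
    moreover have "inj_on complex_of_real {-\<delta><..<\<delta>}" by (auto intro: inj_onI)
    ultimately have "finite {-\<delta><..<\<delta>}" using finite_image_iff by blast
    moreover have "infinite {-\<delta><..<\<delta>}" using \<delta> by (intro infinite_Ioo) simp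
    ultimately show False by blast
  qed
  then show ?thesis using P by simp
qed

lemma upoly_fun_param_mat:
  assumes p: "p \<in> poly_fun n" and I: "finite I"
  shows "upoly_fun (\<lambda>z. p (param_mat n I k (\<lambda>i j. a i j + z * b i j) (\<lambda>i. c i + z * e i)))"
proof (rule upoly_fun_poly_fun[OF p])
  fix i j assume "i < n" "j < n"
  then show "upoly_fun (\<lambda>z. param_mat n I k (\<lambda>i j. a i j + z * b i j) (\<lambda>i. c i + z * e i) $$ (i,j))"
    unfolding param_mat_index[OF \<open>i < n\<close> \<open>j < n\<close>] param_entry_def sym_upper_def using I
    by (intro upoly_fun_if upoly_fun_add upoly_fun_mult upoly_fun_const upoly_fun_id
        upoly_fun_sum upoly_fun_uminus) auto
qed

section \<open>Polynomials vanishing on the boundary vanish on the minor hypersurface\<close>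

(* Real parameters: join (ones_plus_id, 1) to (M, w) by a real line and continue
   analytically. *)
lemma vanishes_at_real_params:
  assumes p: "p \<in> poly_fun n"
    and vanish: "\<And>B. B \<in> sym_boundary n (cop_cone n) \<Longrightarrow> p (map_mat complex_of_real B) = 0"
    and I: "I \<subseteq> {..<n}" and k: "k \<in> I"
  shows "p (param_mat n I k (\<lambda>i j. complex_of_real (M i j)) (\<lambda>i. complex_of_real (w i))) = 0"
proof -
  have fin: "finite I" using I finite_subset by blast
  define D where "D i j = M i j - ones_plus_id i j" for i j
  define d where "d i = w i - 1" for i
  obtain \<delta> where \<delta>: "\<delta> > 0" "\<And>r. \<bar>r\<bar> < \<delta> \<Longrightarrow>
      param_mat n I k (\<lambda>i j. ones_plus_id i j + r * D i j) (\<lambda>i. 1 + r * d i)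
        \<in> sym_boundary n (cop_cone n)"
    using param_mat_near_base_in_boundary[OF I k, of D d] by blast
  define F where "F z = param_mat n I k
      (\<lambda>i j. complex_of_real (ones_plus_id i j) + z * complex_of_real (D i j))
      (\<lambda>i. 1 + z * complex_of_real (d i))" for z
  have "upoly_fun (\<lambda>z. p (F z))" unfolding F_def by (rule upoly_fun_param_mat[OF p fin])
  then have "p (F z) = 0" for z
  proof (rule upoly_fun_vanishes[OF _ \<delta>(1)])
    fix r :: real assume "\<bar>r\<bar> < \<delta>"
    moreover have "F (of_real r) = map_mat complex_of_real
        (param_mat n I k (\<lambda>i j. ones_plus_id i j + r * D i j) (\<lambda>i. 1 + r * d i))"
      unfolding param_mat_of_real F_def by simp
    ultimately show "p (F (of_real r)) = 0" using vanish \<delta>(2) by simp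
  qed
  moreover have "F 1 = param_mat n I k (\<lambda>i j. complex_of_real (M i j)) (\<lambda>i. complex_of_real (w i))"
    unfolding F_def D_def d_def by (simp flip: of_real_add)
  ultimately show ?thesis by metis
qed

(* Complex parameters: join the real parts to the full parameters by the line
   Re + z Im, which is real for real z. *)
lemma vanishes_at_params:
  assumes p: "p \<in> poly_fun n"
    and vanish: "\<And>B. B \<in> sym_boundary n (cop_cone n) \<Longrightarrow> p (map_mat complex_of_real B) = 0"
    and I: "I \<subseteq> {..<n}" and k: "k \<in> I"
  shows "p (param_mat n I k M w) = 0"
proof -
  have fin: "finite I" using I finite_subset by blast
  define F where "F z = param_mat n I k
      (\<lambda>i j. complex_of_real (Re (M i j)) + z * complex_of_real (Im (M i j)))
      (\<lambda>i. complex_of_real (Re (w i)) + z * complex_of_real (Im (w i)))" for z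
  have "upoly_fun (\<lambda>z. p (F z))" unfolding F_def by (rule upoly_fun_param_mat[OF p fin])
  then have "p (F z) = 0" for z
  proof (rule upoly_fun_vanishes[where \<delta> = 1])
    fix r :: real
    have "F (of_real r) = param_mat n I k
        (\<lambda>i j. complex_of_real (Re (M i j) + r * Im (M i j)))
        (\<lambda>i. complex_of_real (Re (w i) + r * Im (w i)))"
      unfolding F_def by simp
    then show "p (F (of_real r)) = 0"
      using vanishes_at_real_params[OF p vanish I k,
          of "\<lambda>i j. Re (M i j) + r * Im (M i j)" "\<lambda>i. Re (w i) + r * Im (w i)"]
      by simp
  qed simp
  moreover have "F \<i> = param_mat n I k M w"
    unfolding F_def using complex_eq by (simp add: mult.commute)
  ultimately show ?thesis by metis
qed

(* Every point A of the hypersurface is a value of some Phi_{I,k}: take a kernel vector of a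
   singular principal block, normalised at a nonzero coordinate k. *)
lemma vanishes_on_minor_hypersurface:
  assumes A: "A \<in> minor_hypersurface n" and p: "p \<in> poly_fun n"
    and vanish: "\<And>B. B \<in> sym_boundary n (cop_cone n) \<Longrightarrow> p (map_mat complex_of_real B) = 0"
  shows "p A = 0"
proof -
  obtain I where I: "I \<subseteq> {..<n}" and singular: "det (submatrix A I I) = 0"
    and A_sym: "A \<in> carrier_mat n n" "A\<^sup>T = A"
    using A unfolding minor_hypersurface_iff sym_complex_def by blast
  obtain u where u: "\<exists>j\<in>I. u j \<noteq> 0" and ker: "\<And>i. i \<in> I \<Longrightarrow> (\<Sum>j\<in>I. A $$ (i,j) * u j) = 0"
    using singular unfolding det_submatrix_eq_0_iff[OF A_sym(1) I] by blast
  obtain k where k: "k \<in> I" "u k \<noteq> 0" using u by blast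
  define w where "w l = u l / u k" for l
  have "(\<Sum>j\<in>I. A $$ (i,j) * kernel_vec I k w j) = 0" if "i \<in> I" for i
  proof -
    have "(\<Sum>j\<in>I. A $$ (i,j) * kernel_vec I k w j) = (\<Sum>j\<in>I. A $$ (i,j) * u j) / u k"
      unfolding sum_divide_distrib using k(2)
      by (intro sum.cong refl) (auto simp: kernel_vec_def w_def)
    then show ?thesis using ker[OF that] by simp
  qed
  then have "param_mat n I k (\<lambda>i j. A $$ (i,j)) w = A"
    by (rule param_mat_reproduces[OF A_sym I k(1)])
  moreover have "p (param_mat n I k (\<lambda>i j. A $$ (i,j)) w) = 0"
    by (rule vanishes_at_params[OF p vanish I k(1)])
  ultimately show ?thesis by simp
qed

lemma minor_hypersurface_subset_variety:
  assumes V: "zariski_closed n V"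
    and boundary: "map_mat complex_of_real ` sym_boundary n (cop_cone n) \<subseteq> V"
  shows "minor_hypersurface n \<subseteq> V"
proof
  fix A assume A: "A \<in> minor_hypersurface n"
  obtain P where P: "P \<subseteq> poly_fun n" and V_eq: "V = {A \<in> sym_complex n. \<forall>p\<in>P. p A = 0}"
    using V unfolding zariski_closed_def by blast
  have "p A = 0" if "p \<in> P" for p
    using vanishes_on_minor_hypersurface[OF A] that P boundary unfolding V_eq by blast
  moreover have "A \<in> sym_complex n" using A by (simp add: minor_hypersurface_def)
  ultimately show "A \<in> V" unfolding V_eq by blast
qed

theorem mainTheorem16:
  fixes n :: nat
  assumes "n \<ge> 1"
  shows "zariski_closure n (map_mat complex_of_real ` sym_boundary n (cop_cone n)) =
         {A \<in> sym_complex n.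
            (\<Prod>I \<in> {I. I \<subseteq> {..<n} \<and> I \<noteq> {}}. det (submatrix A I I)) = 0}"
proof -
  let ?S = "map_mat complex_of_real ` sym_boundary n (cop_cone n)"
  have "zariski_closure n ?S \<subseteq> minor_hypersurface n"
    unfolding zariski_closure_def
    using minor_hypersurface_closed boundary_subset_minor_hypersurface[OF assms] by blast
  moreover have "minor_hypersurface n \<subseteq> zariski_closure n ?S"
    unfolding zariski_closure_def using minor_hypersurface_subset_variety by blast
  ultimately show ?thesis unfolding minor_hypersurface_def by blast
qed

end
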